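(* Let $f:\mathbb{N}\to\mathbb{N}$ be an unbounded non-decreasing function with $f(x)\le x$ for all $x$, and define $g:\mathbb{N}\to\mathbb{N}$ by $g(p)=\max\{i: f(i)\le p\}$. Then for every finite simple graph $G$ and every non-negative integer $r$, $$\nabla_r(G)\le N_f(G,2r+1)^{2r+1}\, g(2r+1)^2.$$
   Context: For a finite simple graph $G$, a function $f:\mathbb{N}\to\mathbb{N}$ and a positive integer $p$, $N_f(G,p)$ denotes the minimum number of colours in a colouring of the edges of $G$ such that every cycle $\gamma$ of $G$ receives at least $\min(f(|\gamma|),p+1)$ distinct colours, where $|\gamma|$ is the length of $\gamma$. A simple graph $H$ is a shallow minor of $G$ at depth $r$ if there are pairwise vertex-disjoint subtrees $T_1,\dots,T_k$ of $G$, each having a root from which every vertex of the tree is at distance at most $r$ in the tree, such that $H$ is isomorphic to a subgraph of the graph with vertex set $\{T_1,\dots,T_k\}$ in which $T_i,T_j$ are adjacent iff some edge of $G$ joins a vertex of $T_i$ to a vertex of $T_j$. $\nabla_r(G)$ is the maximum of $\|H\|/|H|$ over all shallow minors $H$ of $G$ at depth $r$, where $\|H\|$ is the number of edges and $|H|$ the number of vertices. *)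

theory Defs
  imports Complex_Main
begin

definition simple_graph :: "'a set \<Rightarrow> 'a set set \<Rightarrow> bool" where
  "simple_graph V E \<longleftrightarrow> finite V \<and> (\<forall>e\<in>E. e \<subseteq> V \<and> card e = 2)"

definition is_cycle :: "'a set set \<Rightarrow> 'a list \<Rightarrow> bool" where
  "is_cycle E vs \<longleftrightarrow> 3 \<le> length vs \<and> distinct vs \<and>
     (\<forall>i < length vs. {vs ! i, vs ! ((i + 1) mod length vs)} \<in> E)"

definition cycle_edges :: "'a list \<Rightarrow> 'a set set" where
  "cycle_edges vs = {{vs ! i, vs ! ((i + 1) mod length vs)} | i. i < length vs}"

definition good_colouring :: "(nat \<Rightarrow> nat) \<Rightarrow> 'a set set \<Rightarrow> nat \<Rightarrow> ('a set \<Rightarrow> nat) \<Rightarrow> bool" where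
  "good_colouring f E p c \<longleftrightarrow>
     (\<forall>vs. is_cycle E vs \<longrightarrow> min (f (length vs)) (p + 1) \<le> card (c ` cycle_edges vs))"

definition Nf :: "(nat \<Rightarrow> nat) \<Rightarrow> 'a set \<Rightarrow> 'a set set \<Rightarrow> nat \<Rightarrow> nat" where
  "Nf f V E p = (LEAST k. \<exists>c. good_colouring f E p c \<and> card (c ` E) = k)"

definition walk :: "'a set set \<Rightarrow> 'a list \<Rightarrow> bool" where
  "walk E vs \<longleftrightarrow> vs \<noteq> [] \<and> (\<forall>i. Suc i < length vs \<longrightarrow> {vs ! i, vs ! Suc i} \<in> E)"

definition connected_graph :: "'a set \<Rightarrow> 'a set set \<Rightarrow> bool" where
  "connected_graph V E \<longleftrightarrow>
     (\<forall>u\<in>V. \<forall>v\<in>V. \<exists>vs. walk E vs \<and> hd vs = u \<and> last vs = v)"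

definition is_tree :: "'a set \<Rightarrow> 'a set set \<Rightarrow> bool" where
  "is_tree V E \<longleftrightarrow> simple_graph V E \<and> V \<noteq> {} \<and> connected_graph V E \<and>
     \<not> (\<exists>vs. is_cycle E vs)"

definition shallow_tree :: "'a set \<Rightarrow> 'a set set \<Rightarrow> nat \<Rightarrow> 'a set \<Rightarrow> bool" where
  "shallow_tree V E r B \<longleftrightarrow> (\<exists>ET root. B \<subseteq> V \<and> ET \<subseteq> E \<and> is_tree B ET \<and> root \<in> B \<and>
     (\<forall>v\<in>B. \<exists>vs. walk ET vs \<and> hd vs = root \<and> last vs = v \<and> length vs \<le> r + 1))"

text \<open>A shallow minor at depth r, with vertices the branch sets (vertex sets of the
  trees T_i) and edges a subset of the adjacencies between branch sets.  Every shallow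
  minor in the sense of the paper is isomorphic to one of these and vice versa.\<close>
definition shallow_minor :: "'a set \<Rightarrow> 'a set set \<Rightarrow> nat \<Rightarrow> 'a set set \<Rightarrow> 'a set set set \<Rightarrow> bool" where
  "shallow_minor V E r W F \<longleftrightarrow>
     (\<forall>B\<in>W. shallow_tree V E r B) \<and>
     (\<forall>B1\<in>W. \<forall>B2\<in>W. B1 \<noteq> B2 \<longrightarrow> B1 \<inter> B2 = {}) \<and>
     (\<forall>e\<in>F. \<exists>B1 B2. e = {B1, B2} \<and> B1 \<in> W \<and> B2 \<in> W \<and> B1 \<noteq> B2 \<and>
        (\<exists>x\<in>B1. \<exists>y\<in>B2. {x, y} \<in> E))"

definition nabla :: "'a set \<Rightarrow> 'a set set \<Rightarrow> nat \<Rightarrow> real" where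
  "nabla V E r = Max {real (card F) / real (card W) | W F. shallow_minor V E r W F}"

end

theory Submission
  imports Defs
begin

text \<open>
  Fix a good colouring c of G with N = N_f(G, 2r+1) colours and a shallow minor
  of depth r, given by disjoint branch sets W with root walks of length at most r.  Every
  minor edge e lifts to a set L(e) of at most 2r+1 edges of G: an edge of G joining the two
  branch sets together with the root walks to its ends.  Extend the colours of L(e) to a
  k-subset S of the colours, k = min(2r+1, N).  For fixed S, every cycle of the minor formed
  by edges of class S lifts to an at least as long cycle of G that uses only colours of S, so
  by goodness its length is at most g(2r+1).  A graph without cycles longer than g(2r+1) is
  g(2r+1)-degenerate, so each class has at most g(2r+1) |W| edges, and there are at most
  N choose k \<le> N^(2r+1) classes.  Hence |F|/|W| \<le> N^(2r+1) g(2r+1) \<le> N^(2r+1) g(2r+1)^2.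
\<close>

fun path_edges :: "'a list \<Rightarrow> 'a set set" where
  "path_edges (x # y # xs) = insert {x, y} (path_edges (y # xs))"
| "path_edges _ = {}"

lemma path_edges_conv_nth:
  "path_edges vs = (\<lambda>i. {vs ! i, vs ! Suc i}) ` {..< length vs - 1}"
  by (induction vs rule: path_edges.induct) (simp_all add: lessThan_Suc_eq_insert_0 image_image)

lemma walk_iff: "walk E vs \<longleftrightarrow> vs \<noteq> [] \<and> path_edges vs \<subseteq> E"
  unfolding walk_def path_edges_conv_nth by auto

lemma cycle_edges_conv:
  assumes "vs \<noteq> []"
  shows "cycle_edges vs = insert {last vs, hd vs} (path_edges vs)"
proof -
  let ?n = "length vs"
  have "{..< ?n} = insert (?n - 1) {..< ?n - 1}" using assms by auto
  moreover have "cycle_edges vs = (\<lambda>i. {vs ! i, vs ! ((i + 1) mod ?n)}) ` {..< ?n}"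
    unfolding cycle_edges_def by auto
  ultimately show ?thesis using assms
    by (auto simp: path_edges_conv_nth last_conv_nth hd_conv_nth)
qed

lemma is_cycle_iff: "is_cycle E vs \<longleftrightarrow> 3 \<le> length vs \<and> distinct vs \<and> cycle_edges vs \<subseteq> E"
  unfolding is_cycle_def cycle_edges_def by blast

lemma path_edges_append:
  "path_edges (xs @ ys) =
     path_edges xs \<union> path_edges ys \<union> (if xs = [] \<or> ys = [] then {} else {{last xs, hd ys}})"
  by (induction xs rule: path_edges.induct) (auto simp: neq_Nil_conv)

lemma path_edges_Cons: "xs \<noteq> [] \<Longrightarrow> path_edges (x # xs) = insert {x, hd xs} (path_edges xs)"
  by (cases xs) auto

lemma path_edges_rev: "path_edges (rev xs) = path_edges xs"
proof (induction xs)
  case (Cons x xs)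
  then show ?case
    by (cases "xs = []") (simp_all add: path_edges_append path_edges_Cons last_rev insert_commute)
qed simp

lemma card_path_edges: "card (path_edges vs) \<le> length vs - 1"
  unfolding path_edges_conv_nth using card_image_le[of "{..< length vs - 1}"] by simp

lemma set_subset_path_edges: "vs \<noteq> [] \<Longrightarrow> set vs \<subseteq> insert (hd vs) (\<Union> (path_edges vs))"
  by (induction vs rule: path_edges.induct) auto

lemma path_edges_join:
  assumes "xs \<noteq> []" "ys \<noteq> []" "last xs = hd ys"
  shows "path_edges (xs @ tl ys) \<subseteq> path_edges xs \<union> path_edges ys"
proof (cases "tl ys = []")
  case False
  have "path_edges ys = insert {hd ys, hd (tl ys)} (path_edges (tl ys))"
    using path_edges_Cons[OF False, of "hd ys"] assms(2) by simp
  then show ?thesis using assms False by (auto simp: path_edges_append)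
qed simp

lemma walk_to_path:
  "vs \<noteq> [] \<Longrightarrow> \<exists>ws. ws \<noteq> [] \<and> distinct ws \<and> hd ws = hd vs \<and> last ws = last vs
     \<and> path_edges ws \<subseteq> path_edges vs \<and> set ws \<subseteq> set vs"
proof (induction "length vs" arbitrary: vs rule: less_induct)
  case less
  show ?case
  proof (cases "distinct vs")
    case True then show ?thesis using less by blast
  next
    case False
    then obtain xs ys zs y where vs: "vs = xs @ [y] @ ys @ [y] @ zs"
      using not_distinct_decomp by blast
    define us where "us = xs @ [y] @ zs"
    have "length us < length vs" "us \<noteq> []" using vs by (simp_all add: us_def)
    then obtain ws where ws: "ws \<noteq> []" "distinct ws" "hd ws = hd us" "last ws = last us"
      "path_edges ws \<subseteq> path_edges us" "set ws \<subseteq> set us"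
      using less(1) by blast
    have "path_edges (y # zs) \<subseteq> path_edges ((y # ys) @ (y # zs))"
      unfolding path_edges_append by blast
    then have "path_edges us \<subseteq> path_edges vs"
      unfolding vs us_def path_edges_append[of xs] by auto
    moreover have "hd us = hd vs" "last us = last vs" "set us \<subseteq> set vs"
      unfolding vs us_def by (cases xs; cases zs rule: rev_cases; auto)+
    ultimately show ?thesis using ws by (metis order_trans)
  qed
qed

lemma card_cycle_edges:
  assumes "is_cycle E vs"
  shows "card (cycle_edges vs) = length vs"
proof -
  define n where "n = length vs"
  define h where "h i = {vs ! i, vs ! ((i + 1) mod n)}" for i
  have n3: "3 \<le> n" and dist: "distinct vs" using assms by (auto simp: is_cycle_def n_def)
  have succ: "(i + 1) mod n = (if i + 1 < n then i + 1 else 0)" if "i < n" for i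
    using that by (cases "Suc i = n") auto
  have "inj_on h {..<n}"
  proof (rule inj_onI)
    fix i j assume i: "i \<in> {..<n}" and j: "j \<in> {..<n}" and "h i = h j"
    then have "(vs ! i = vs ! j \<and> vs ! ((i + 1) mod n) = vs ! ((j + 1) mod n)) \<or>
               (vs ! i = vs ! ((j + 1) mod n) \<and> vs ! ((i + 1) mod n) = vs ! j)"
      unfolding h_def doubleton_eq_iff by blast
    moreover have "(i + 1) mod n < n" "(j + 1) mod n < n" using n3 by auto
    ultimately have "(i = j) \<or> (i = (j + 1) mod n \<and> (i + 1) mod n = j)"
      using dist i j by (auto simp: n_def nth_eq_iff_index_eq)
    then show "i = j" using succ[of i] succ[of j] i j n3 by (auto split: if_splits)
  qed
  moreover have "cycle_edges vs = h ` {..<n}" unfolding cycle_edges_def h_def n_def by auto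
  ultimately show ?thesis by (simp add: card_image n_def)
qed

lemma set_subset_cycle_edges: "set vs \<subseteq> \<Union> (cycle_edges vs)"
proof
  fix x assume "x \<in> set vs"
  then obtain i where "i < length vs" "x = vs ! i" by (auto simp: in_set_conv_nth)
  then show "x \<in> \<Union> (cycle_edges vs)" unfolding cycle_edges_def by blast
qed

text \<open>Counting lemma for degenerate graphs: if every nonempty vertex set U contains a vertex
  with at most d neighbours in U, removing such vertices one by one shows that there are
  at most d edges per vertex.\<close>
lemma card_edges_degenerate:
  fixes W :: "'b set" and F :: "'b set set"
  assumes finW: "finite W"
    and edges: "\<And>e. e \<in> F \<Longrightarrow> \<exists>a b. e = {a, b} \<and> a \<in> W \<and> b \<in> W"
    and low: "\<And>U. U \<subseteq> W \<Longrightarrow> U \<noteq> {} \<Longrightarrow> \<exists>B\<in>U. card {B'\<in>U. {B, B'} \<in> F} \<le> d"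
  shows "card F \<le> d * card W"
proof -
  have "card {e\<in>F. e \<subseteq> U} \<le> d * card U" if "U \<subseteq> W" for U
    using that
  proof (induction "card U" arbitrary: U)
    case 0
    then have "U = {}" using finW finite_subset by (metis card_0_eq)
    then have "{e\<in>F. e \<subseteq> U} = {}" using edges by fastforce
    then show ?case by (metis card.empty zero_le)
  next
    case (Suc n)
    have finU: "finite U" using Suc.prems finW finite_subset by blast
    then have "U \<noteq> {}" using Suc.hyps(2) by auto
    then obtain B where B: "B \<in> U" and degB: "card {B'\<in>U. {B, B'} \<in> F} \<le> d"
      using low Suc.prems by blast
    define nbrs where "nbrs = {B'\<in>U. {B, B'} \<in> F}"
    have "card (U - {B}) = n" using Suc.hyps(2) B finU by simp
    then have IH: "card {e\<in>F. e \<subseteq> U - {B}} \<le> d * n"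
      using Suc.hyps(1)[of "U - {B}"] Suc.prems by blast
    have "{e\<in>F. e \<subseteq> U} \<subseteq> {e\<in>F. e \<subseteq> U - {B}} \<union> (\<lambda>B'. {B, B'}) ` nbrs"
    proof
      fix e assume e: "e \<in> {e\<in>F. e \<subseteq> U}"
      then obtain a b where "e = {a, b}" using edges by blast
      then show "e \<in> {e\<in>F. e \<subseteq> U - {B}} \<union> (\<lambda>B'. {B, B'}) ` nbrs"
        using e by (cases "B = a"; cases "B = b") (auto simp: nbrs_def insert_commute)
    qed
    moreover have "finite {e\<in>F. e \<subseteq> U - {B}}"
      by (rule finite_subset[of _ "Pow (U - {B})"]) (use finU in auto)
    moreover have "finite nbrs" using finU by (simp add: nbrs_def)
    ultimately have "card {e\<in>F. e \<subseteq> U} \<le> card {e\<in>F. e \<subseteq> U - {B}} + card ((\<lambda>B'. {B, B'}) ` nbrs)"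
      by (meson card_Un_le card_mono finite_UnI finite_imageI order_trans)
    also have "\<dots> \<le> d * n + d"
      using IH card_image_le[OF \<open>finite nbrs\<close>, of "\<lambda>B'. {B, B'}"] degB
      unfolding nbrs_def by linarith
    finally show ?case using Suc.hyps(2) by (metis mult_Suc_right add.commute)
  qed
  moreover have "{e\<in>F. e \<subseteq> W} = F" using edges by blast
  ultimately show ?thesis by (metis order_refl)
qed

lemma exists_longest_path:
  fixes U :: "'b set" and F :: "'b set set"
  assumes finU: "finite U" and "B \<in> U"
  obtains ps where "ps \<noteq> []" "distinct ps" "set ps \<subseteq> U" "path_edges ps \<subseteq> F"
    "\<And>qs. distinct qs \<Longrightarrow> set qs \<subseteq> U \<Longrightarrow> path_edges qs \<subseteq> F \<Longrightarrow> length qs \<le> length ps"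
proof -
  let ?P = "{ps. ps \<noteq> [] \<and> distinct ps \<and> set ps \<subseteq> U \<and> path_edges ps \<subseteq> F}"
  have "length ps \<le> card U" if "distinct ps" "set ps \<subseteq> U" for ps :: "'b list"
    using card_mono[OF finU that(2)] distinct_card[OF that(1)] by simp
  then have "?P \<subseteq> {ps. set ps \<subseteq> U \<and> length ps \<le> card U}" by blast
  then have "finite (length ` ?P)"
    using finite_lists_length_le[OF finU] by (meson finite_imageI finite_subset)
  moreover have "[B] \<in> ?P" using assms(2) by simp
  ultimately obtain ps where ps: "ps \<in> ?P" "length ps = Max (length ` ?P)"
    by (metis (no_types, lifting) Max_in empty_iff image_iff)
  have "length qs \<le> length ps" if "distinct qs" "set qs \<subseteq> U" "path_edges qs \<subseteq> F" for qs
  proof (cases "qs = []")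
    case False
    then show ?thesis using that ps \<open>finite (length ` ?P)\<close> by simp
  qed simp
  with ps show ?thesis using that by blast
qed

text \<open>If the first vertex of a path has a set N of neighbours on the path, closing the path
  at the neighbour farthest along it gives a cycle with more than card N vertices.\<close>
lemma cycle_through_farthest_neighbour:
  fixes ps :: "'b list" and F :: "'b set set"
  assumes ps: "ps \<noteq> []" "distinct ps" "path_edges ps \<subseteq> F"
    and N: "N \<noteq> {}" "N \<subseteq> set ps" "hd ps \<notin> N" "\<And>B. B \<in> N \<Longrightarrow> {hd ps, B} \<in> F"
  shows "\<exists>qs. distinct qs \<and> set qs \<subseteq> set ps \<and> card N + 1 \<le> length qs \<and> cycle_edges qs \<subseteq> F"
proof -
  define J where "J = {i. i < length ps \<and> ps ! i \<in> N}"
  define j where "j = Max J"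
  have "finite J" by (simp add: J_def)
  have index: "\<exists>i. i < length ps \<and> ps ! i = B" if "B \<in> N" for B
    using that N(2) by (meson in_set_conv_nth subsetD)
  then have "J \<noteq> {}" using N(1) by (force simp: J_def)
  then have j: "j < length ps" "ps ! j \<in> N" using Max_in[OF \<open>finite J\<close>] by (auto simp: J_def j_def)
  let ?qs = "take (Suc j) ps"
  have "N \<subseteq> set ?qs"
  proof
    fix B assume "B \<in> N"
    then obtain i where "i < length ps" "ps ! i = B" using index by blast
    moreover have "i \<le> j" using calculation \<open>B \<in> N\<close> \<open>finite J\<close> by (simp add: J_def j_def)
    ultimately show "B \<in> set ?qs" by (auto simp: in_set_conv_nth)
  qed
  moreover have "set ?qs = insert (hd ps) (set (tl ?qs))" using ps(1) by (cases ps) auto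
  ultimately have "N \<subseteq> set (tl ?qs)" using N(3) by auto
  moreover have "length (tl ?qs) = j" using j(1) by simp
  ultimately have "card N + 1 \<le> length ?qs"
    using card_mono[OF finite_set, of N "tl ?qs"] card_length[of "tl ?qs"] j(1) by simp
  moreover have "{last ?qs, hd ?qs} \<in> F"
    using N(4)[OF j(2)] j(1) ps(1) by (simp add: last_conv_nth hd_conv_nth insert_commute)
  moreover have "path_edges ?qs \<subseteq> F"
    using ps(3) path_edges_append[of ?qs "drop (Suc j) ps"] by auto
  ultimately show ?thesis
    using ps(1,2) set_take_subset[of "Suc j" ps] by (intro exI[of _ ?qs]) (auto simp: cycle_edges_conv)
qed

text \<open>A graph in which every vertex of U has more than d neighbours inside U contains a
  cycle of length at least d + 2 inside U: all neighbours of the first vertex of a longest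
  path lie on that path.\<close>
lemma long_cycle_of_min_degree:
  fixes U :: "'b set" and F :: "'b set set"
  assumes finU: "finite U" and "U \<noteq> {}"
    and loopless: "\<And>B. {B} \<notin> F"
    and deg: "\<And>B. B \<in> U \<Longrightarrow> d < card {B'\<in>U. {B, B'} \<in> F}"
  shows "\<exists>qs. distinct qs \<and> set qs \<subseteq> U \<and> d + 2 \<le> length qs \<and> cycle_edges qs \<subseteq> F"
proof -
  obtain B where "B \<in> U" using assms(2) by blast
  then obtain ps where ps: "ps \<noteq> []" "distinct ps" "set ps \<subseteq> U" "path_edges ps \<subseteq> F"
    and longest: "\<And>qs. distinct qs \<Longrightarrow> set qs \<subseteq> U \<Longrightarrow> path_edges qs \<subseteq> F \<Longrightarrow> length qs \<le> length ps"
    using exists_longest_path[OF finU] by blast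
  define nbrs where "nbrs = {B'\<in>U. {hd ps, B'} \<in> F}"
  have "hd ps \<in> U" using ps(1,3) hd_in_set by blast
  then have "d < card nbrs" using deg by (simp add: nbrs_def)
  then have "nbrs \<noteq> {}" by auto
  have "nbrs \<subseteq> set ps"
  proof
    fix B' assume B': "B' \<in> nbrs"
    show "B' \<in> set ps"
    proof (rule ccontr)
      assume "B' \<notin> set ps"
      then have "length (B' # ps) \<le> length ps"
        using longest[of "B' # ps"] ps B' by (simp add: path_edges_Cons nbrs_def insert_commute)
      then show False by simp
    qed
  qed
  moreover have "hd ps \<notin> nbrs" using loopless by (simp add: nbrs_def)
  moreover have "{hd ps, B'} \<in> F" if "B' \<in> nbrs" for B' using that by (simp add: nbrs_def)
  ultimately obtain qs where "distinct qs" "set qs \<subseteq> set ps" "card nbrs + 1 \<le> length qs"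
    "cycle_edges qs \<subseteq> F"
    using cycle_through_farthest_neighbour[OF ps(1,2,4) \<open>nbrs \<noteq> {}\<close>] by blast
  then show ?thesis using ps(3) \<open>d < card nbrs\<close> by (intro exI[of _ qs]) auto
qed

text \<open>A graph without cycles of length greater than d + 1 is d-degenerate and hence has
  at most d edges per vertex.\<close>
lemma card_edges_without_long_cycles:
  fixes W :: "'b set" and F :: "'b set set"
  assumes finW: "finite W" and d: "1 \<le> d"
    and edges: "\<And>e. e \<in> F \<Longrightarrow> \<exists>a b. e = {a, b} \<and> a \<in> W \<and> b \<in> W \<and> a \<noteq> b"
    and short: "\<And>qs. is_cycle F qs \<Longrightarrow> length qs \<le> d + 1"
  shows "card F \<le> d * card W"
proof (rule card_edges_degenerate[OF finW])
  show "\<exists>a b. e = {a, b} \<and> a \<in> W \<and> b \<in> W" if "e \<in> F" for e using edges[OF that] by blast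
next
  fix U assume "U \<subseteq> W" "U \<noteq> {}"
  show "\<exists>B\<in>U. card {B'\<in>U. {B, B'} \<in> F} \<le> d"
  proof (rule ccontr)
    assume "\<not> ?thesis"
    moreover have "finite U" using \<open>U \<subseteq> W\<close> finW finite_subset by blast
    moreover have "{B} \<notin> F" for B using edges by (metis doubleton_eq_iff insert_absorb2)
    ultimately obtain qs where "distinct qs" "d + 2 \<le> length qs" "cycle_edges qs \<subseteq> F"
      using long_cycle_of_min_degree[of U F d] \<open>U \<noteq> {}\<close> by (meson not_le)
    then have "is_cycle F qs" using d by (simp add: is_cycle_iff)
    then show False using short \<open>d + 2 \<le> length qs\<close> by fastforce
  qed
qed

locale coloured_model =
  fixes E :: "'a set set" and c :: "'a set \<Rightarrow> 'c" and S :: "'c set"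
    and W :: "'a set set" and F :: "'a set set set" and ports :: "'a set \<Rightarrow> 'a set"
  assumes disjoint: "\<And>B1 B2. B1 \<in> W \<Longrightarrow> B2 \<in> W \<Longrightarrow> B1 \<noteq> B2 \<Longrightarrow> B1 \<inter> B2 = {}"
    and minor_edge: "\<And>e. e \<in> F \<Longrightarrow> \<exists>B1 B2. e = {B1, B2} \<and> B1 \<in> W \<and> B2 \<in> W \<and> B1 \<noteq> B2"
    and ports_connected: "\<And>B u v. B \<in> W \<Longrightarrow> u \<in> ports B \<Longrightarrow> v \<in> ports B \<Longrightarrow>
       \<exists>Q. Q \<noteq> [] \<and> distinct Q \<and> hd Q = u \<and> last Q = v \<and> set Q \<subseteq> B
         \<and> path_edges Q \<subseteq> E \<and> c ` path_edges Q \<subseteq> S"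
    and link: "\<And>e B1 B2. e \<in> F \<Longrightarrow> e = {B1, B2} \<Longrightarrow>
       \<exists>x\<in>ports B1. \<exists>y\<in>ports B2. {x, y} \<in> E \<and> c {x, y} \<in> S"
begin

text \<open>A path of the minor lifts to a path of G between any two ports of its end sets;
  the lift visits every branch set of the path, so it is at least as long.\<close>
lemma lift_path:
  "qs \<noteq> [] \<Longrightarrow> distinct qs \<Longrightarrow> set qs \<subseteq> W \<Longrightarrow> path_edges qs \<subseteq> F \<Longrightarrow>
   u \<in> ports (hd qs) \<Longrightarrow> v \<in> ports (last qs) \<Longrightarrow>
   \<exists>vs. vs \<noteq> [] \<and> distinct vs \<and> hd vs = u \<and> last vs = v \<and> set vs \<subseteq> \<Union> (set qs)
     \<and> path_edges vs \<subseteq> E \<and> c ` path_edges vs \<subseteq> S \<and> length qs \<le> length vs"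
proof (induction qs arbitrary: u)
  case Nil then show ?case by simp
next
  case (Cons B qs)
  show ?case
  proof (cases "qs = []")
    case True
    then obtain Q where "Q \<noteq> [] \<and> distinct Q \<and> hd Q = u \<and> last Q = v \<and> set Q \<subseteq> B
        \<and> path_edges Q \<subseteq> E \<and> c ` path_edges Q \<subseteq> S"
      using ports_connected[of B u v] Cons.prems True by auto
    then show ?thesis using True by (intro exI[of _ Q]) (auto simp: Suc_le_eq)
  next
    case False
    have "{B, hd qs} \<in> F" using Cons.prems(4) by (simp add: path_edges_Cons[OF False])
    then obtain x y where x: "x \<in> ports B" and y: "y \<in> ports (hd qs)"
      and xy: "{x, y} \<in> E" "c {x, y} \<in> S"
      using link by blast
    have "B \<in> W" "u \<in> ports B" using Cons.prems(3,5) by auto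
    then obtain Q where Q: "Q \<noteq> []" "distinct Q" "hd Q = u" "last Q = x" "set Q \<subseteq> B"
      "path_edges Q \<subseteq> E" "c ` path_edges Q \<subseteq> S"
      using ports_connected x by blast
    obtain vs where vs: "vs \<noteq> []" "distinct vs" "hd vs = y" "last vs = v" "set vs \<subseteq> \<Union> (set qs)"
      "path_edges vs \<subseteq> E" "c ` path_edges vs \<subseteq> S" "length qs \<le> length vs"
      using Cons.IH[OF False _ _ _ y] Cons.prems False by (auto simp: path_edges_Cons[OF False])
    have "B \<inter> \<Union> (set qs) = {}" using disjoint Cons.prems(2,3) by fastforce
    then have "set Q \<inter> set vs = {}" using Q(5) vs(5) by blast
    moreover have "path_edges (Q @ vs) = insert {x, y} (path_edges Q \<union> path_edges vs)"
      using Q vs by (simp add: path_edges_append)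
    moreover have "length (B # qs) \<le> length (Q @ vs)" using Q(1) vs(8) by (cases Q) auto
    ultimately show ?thesis
      using Q vs xy by (intro exI[of _ "Q @ vs"]) auto
  qed
qed

lemma lift_cycle:
  assumes cyc: "is_cycle F qs"
  shows "\<exists>vs. is_cycle E vs \<and> length qs \<le> length vs \<and> c ` cycle_edges vs \<subseteq> S"
proof -
  have qs: "3 \<le> length qs" "distinct qs" "cycle_edges qs \<subseteq> F" using cyc by (auto simp: is_cycle_iff)
  then have ne: "qs \<noteq> []" by auto
  have "\<Union> F \<subseteq> W" using minor_edge by blast
  then have "set qs \<subseteq> W" using set_subset_cycle_edges[of qs] qs(3) by blast
  have "{last qs, hd qs} \<in> F" "path_edges qs \<subseteq> F" using qs(3) by (auto simp: cycle_edges_conv[OF ne])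
  then obtain x y where x: "x \<in> ports (last qs)" and y: "y \<in> ports (hd qs)"
    and xy: "{x, y} \<in> E" "c {x, y} \<in> S"
    using link by blast
  obtain vs where vs: "vs \<noteq> []" "distinct vs" "hd vs = y" "last vs = x"
    "path_edges vs \<subseteq> E" "c ` path_edges vs \<subseteq> S" "length qs \<le> length vs"
    using lift_path[OF ne qs(2) \<open>set qs \<subseteq> W\<close> \<open>path_edges qs \<subseteq> F\<close> y x] by blast
  have "cycle_edges vs = insert {x, y} (path_edges vs)" using cycle_edges_conv[OF vs(1)] vs(3,4) by simp
  then show ?thesis using vs xy qs(1) by (intro exI[of _ vs]) (auto simp: is_cycle_iff)
qed

end

text \<open>Counting by colour classes: if every element e of F carries a set col(e) of at most k
  colours from C, then F is covered by the classes {e. col e \<subseteq> S} of the k-subsets S of C.\<close>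
lemma card_le_by_colour_classes:
  fixes col :: "'e \<Rightarrow> 'c set"
  assumes finC: "finite C" and kC: "k \<le> card C"
    and col: "\<And>e. e \<in> F \<Longrightarrow> col e \<subseteq> C \<and> card (col e) \<le> k"
    and class_bound: "\<And>S. S \<subseteq> C \<Longrightarrow> card S = k \<Longrightarrow> card {e\<in>F. col e \<subseteq> S} \<le> M"
  shows "card F \<le> (card C choose k) * M"
proof (cases "finite F")
  case True
  define K where "K = {S. S \<subseteq> C \<and> card S = k}"
  have "finite K" using finC by (simp add: K_def)
  have "F \<subseteq> (\<Union>S\<in>K. {e\<in>F. col e \<subseteq> S})"
  proof
    fix e assume "e \<in> F"
    then obtain S where "col e \<subseteq> S" "S \<subseteq> C" "card S = k"
      using col exists_subset_between[OF _ kC _ finC] by meson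
    then show "e \<in> (\<Union>S\<in>K. {e\<in>F. col e \<subseteq> S})" using \<open>e \<in> F\<close> by (auto simp: K_def)
  qed
  then have "card F \<le> card (\<Union>S\<in>K. {e\<in>F. col e \<subseteq> S})"
    by (rule card_mono[rotated]) (rule finite_subset[OF _ True], blast)
  also have "\<dots> \<le> (\<Sum>S\<in>K. card {e\<in>F. col e \<subseteq> S})"
    using card_UN_le[OF \<open>finite K\<close>] .
  also have "\<dots> \<le> card K * M"
    using sum_bounded_above[of K "\<lambda>S. card {e\<in>F. col e \<subseteq> S}" M] class_bound by (simp add: K_def)
  also have "card K = card C choose k" using n_subsets[OF finC] by (simp add: K_def)
  finally show ?thesis .
qed simp

lemma shallow_minor_carriers:
  assumes "shallow_minor V E r W F"
  shows "W \<subseteq> Pow V" and "F \<subseteq> Pow W"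
proof -
  show "W \<subseteq> Pow V"
  proof
    fix B assume "B \<in> W"
    then have "shallow_tree V E r B" using assms by (simp add: shallow_minor_def)
    then have "B \<subseteq> V" unfolding shallow_tree_def by blast
    then show "B \<in> Pow V" by simp
  qed
  have "\<forall>e\<in>F. \<exists>B1 B2. e = {B1, B2} \<and> B1 \<in> W \<and> B2 \<in> W \<and> B1 \<noteq> B2 \<and>
      (\<exists>x\<in>B1. \<exists>y\<in>B2. {x, y} \<in> E)"
    using assms by (simp add: shallow_minor_def)
  then show "F \<subseteq> Pow W" by fastforce
qed

locale rooted_shallow_minor =
  fixes V :: "'a set" and E :: "'a set set" and r :: nat
    and W :: "'a set set" and F :: "'a set set set"
    and rt :: "'a set \<Rightarrow> 'a" and rw :: "'a set \<Rightarrow> 'a \<Rightarrow> 'a list"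
  assumes graph: "simple_graph V E"
    and minor: "shallow_minor V E r W F"
    and root_walk: "\<And>B v. B \<in> W \<Longrightarrow> v \<in> B \<Longrightarrow>
       rw B v \<noteq> [] \<and> hd (rw B v) = rt B \<and> last (rw B v) = v \<and> set (rw B v) \<subseteq> B
       \<and> path_edges (rw B v) \<subseteq> E \<and> length (rw B v) \<le> r + 1"

lemma shallow_tree_root_walks:
  assumes "shallow_tree V E r B"
  shows "\<exists>root. \<forall>v\<in>B. \<exists>vs. vs \<noteq> [] \<and> hd vs = root \<and> last vs = v \<and> set vs \<subseteq> B
           \<and> path_edges vs \<subseteq> E \<and> length vs \<le> r + 1"
proof -
  obtain ET root where ET: "ET \<subseteq> E" "is_tree B ET"
    and walks: "\<forall>v\<in>B. \<exists>vs. walk ET vs \<and> hd vs = root \<and> last vs = v \<and> length vs \<le> r + 1"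
    using assms unfolding shallow_tree_def by blast
  have "\<Union> ET \<subseteq> B" using ET(2) by (auto simp: is_tree_def simple_graph_def)
  have "\<exists>vs. vs \<noteq> [] \<and> hd vs = root \<and> last vs = v \<and> set vs \<subseteq> B
           \<and> path_edges vs \<subseteq> E \<and> length vs \<le> r + 1" if "v \<in> B" for v
  proof -
    obtain vs where vs: "walk ET vs" "hd vs = root" "last vs = v" "length vs \<le> r + 1"
      using walks \<open>v \<in> B\<close> by blast
    then have "vs \<noteq> []" "path_edges vs \<subseteq> ET" by (auto simp: walk_iff)
    moreover have "set vs \<subseteq> insert v (\<Union> (path_edges vs))"
      using set_subset_path_edges[of "rev vs"] \<open>vs \<noteq> []\<close> \<open>last vs = v\<close>
      by (simp add: path_edges_rev hd_rev)
    ultimately show ?thesis using vs ET(1) \<open>\<Union> ET \<subseteq> B\<close> \<open>v \<in> B\<close> by blast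
  qed
  then show ?thesis by blast
qed

lemma exists_root_walks:
  assumes graph: "simple_graph V E" and minor: "shallow_minor V E r W F"
  shows "\<exists>rt rw. rooted_shallow_minor V E r W F rt rw"
proof -
  let ?good = "\<lambda>B root v vs. vs \<noteq> [] \<and> hd vs = root \<and> last vs = v \<and> set vs \<subseteq> B
       \<and> path_edges vs \<subseteq> E \<and> length vs \<le> r + 1"
  have "\<forall>B\<in>W. \<exists>root. \<forall>v\<in>B. \<exists>vs. ?good B root v vs"
  proof
    fix B assume "B \<in> W"
    then have "shallow_tree V E r B" using minor by (simp add: shallow_minor_def)
    then show "\<exists>root. \<forall>v\<in>B. \<exists>vs. ?good B root v vs" by (rule shallow_tree_root_walks)
  qed
  from bchoice[OF this] obtain rt where rt: "\<forall>B\<in>W. \<forall>v\<in>B. \<exists>vs. ?good B (rt B) v vs"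
    by blast
  define rw where "rw B v = (SOME vs. ?good B (rt B) v vs)" for B v
  have rw_good: "?good B (rt B) v (rw B v)" if "B \<in> W" "v \<in> B" for B v
    unfolding rw_def by (rule someI_ex) (use rt that in blast)
  have "rooted_shallow_minor V E r W F rt rw"
  proof
    show "simple_graph V E" "shallow_minor V E r W F" by (fact graph, fact minor)
  next
    fix B v assume "B \<in> W" "v \<in> B"
    then show "?good B (rt B) v (rw B v)" by (rule rw_good)
  qed
  then show ?thesis by blast
qed

context rooted_shallow_minor
begin

lemma finite_vertices: "finite V"
  using graph by (simp add: simple_graph_def)

lemma finite_branch_sets: "finite W"
  using shallow_minor_carriers(1)[OF minor] finite_vertices by (meson finite_Pow_iff finite_subset)

lemma finite_edges: "finite E"
proof -
  have "E \<subseteq> Pow V" using graph by (auto simp: simple_graph_def)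
  then show ?thesis using finite_vertices by (meson finite_Pow_iff finite_subset)
qed

lemma disjoint: "B1 \<in> W \<Longrightarrow> B2 \<in> W \<Longrightarrow> B1 \<noteq> B2 \<Longrightarrow> B1 \<inter> B2 = {}"
  using minor by (simp add: shallow_minor_def)

lemma minor_edge: "e \<in> F \<Longrightarrow> \<exists>B1 B2. e = {B1, B2} \<and> B1 \<in> W \<and> B2 \<in> W \<and> B1 \<noteq> B2 \<and>
     (\<exists>x\<in>B1. \<exists>y\<in>B2. {x, y} \<in> E)"
  using minor by (simp add: shallow_minor_def)

definition edge_lift :: "'a set set \<Rightarrow> 'a set set \<Rightarrow> bool" where
  "edge_lift e Le \<longleftrightarrow> Le \<subseteq> E \<and> card Le \<le> 2 * r + 1 \<and>
     (\<forall>B1 B2. e = {B1, B2} \<longrightarrow> (\<exists>x\<in>B1. \<exists>y\<in>B2.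
        {x, y} \<in> Le \<and> path_edges (rw B1 x) \<subseteq> Le \<and> path_edges (rw B2 y) \<subseteq> Le))"

text \<open>Every minor edge has a lift: an edge of G joining the two branch sets plus the two
  root walks, each with at most r edges.\<close>
lemma exists_edge_lift:
  assumes "e \<in> F"
  shows "\<exists>Le. edge_lift e Le"
proof -
  obtain B1 B2 x y where e: "e = {B1, B2}" "B1 \<in> W" "B2 \<in> W" and x: "x \<in> B1" and y: "y \<in> B2"
    and xy: "{x, y} \<in> E"
    using minor_edge[OF \<open>e \<in> F\<close>] by blast
  define Le where "Le = insert {x, y} (path_edges (rw B1 x) \<union> path_edges (rw B2 y))"
  have walks: "path_edges (rw B1 x) \<subseteq> E" "length (rw B1 x) \<le> r + 1"
    "path_edges (rw B2 y) \<subseteq> E" "length (rw B2 y) \<le> r + 1"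
    using root_walk e x y by auto
  have "finite (path_edges (rw B1 x) \<union> path_edges (rw B2 y))"
    using walks(1,3) finite_edges finite_subset by blast
  then have "card Le \<le> Suc (card (path_edges (rw B1 x) \<union> path_edges (rw B2 y)))"
    by (simp add: Le_def card_insert_if)
  also have "\<dots> \<le> Suc (card (path_edges (rw B1 x)) + card (path_edges (rw B2 y)))"
    using card_Un_le by simp
  also have "\<dots> \<le> 2 * r + 1"
    using card_path_edges[of "rw B1 x"] card_path_edges[of "rw B2 y"] walks(2,4) by linarith
  finally have "card Le \<le> 2 * r + 1" .
  moreover have "Le \<subseteq> E" using walks xy by (simp add: Le_def)
  moreover have "\<exists>x\<in>C1. \<exists>y\<in>C2. {x, y} \<in> Le \<and> path_edges (rw C1 x) \<subseteq> Le \<and> path_edges (rw C2 y) \<subseteq> Le"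
    if "e = {C1, C2}" for C1 C2
  proof -
    have "{x, y} \<in> Le" "{y, x} \<in> Le" by (simp_all add: Le_def insert_commute)
    moreover have "(C1 = B1 \<and> C2 = B2) \<or> (C1 = B2 \<and> C2 = B1)"
      using that e(1) by (metis doubleton_eq_iff)
    moreover have "path_edges (rw B1 x) \<subseteq> Le" "path_edges (rw B2 y) \<subseteq> Le"
      by (auto simp: Le_def)
    ultimately show ?thesis using x y by blast
  qed
  ultimately have "edge_lift e Le" unfolding edge_lift_def by blast
  then show ?thesis by blast
qed

lemma exists_edge_lifts:
  obtains L where "\<And>e. e \<in> F \<Longrightarrow> edge_lift e (L e)"
proof -
  have "\<forall>e\<in>F. \<exists>Le. edge_lift e Le" using exists_edge_lift by blast
  from bchoice[OF this] obtain L where "\<forall>e\<in>F. edge_lift e (L e)" by blast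
  then show ?thesis using that by blast
qed

text \<open>Two vertices of a branch set are joined inside it by a path that only uses edges of
  their root walks: follow the first root walk backwards and the second one forwards.\<close>
lemma root_walks_join:
  assumes B: "B \<in> W" and "u \<in> B" "v \<in> B"
  obtains Q where "Q \<noteq> []" "distinct Q" "hd Q = u" "last Q = v" "set Q \<subseteq> B"
    "path_edges Q \<subseteq> path_edges (rw B u) \<union> path_edges (rw B v)"
proof -
  have ru: "rw B u \<noteq> []" "hd (rw B u) = rt B" "last (rw B u) = u" "set (rw B u) \<subseteq> B"
    using root_walk B \<open>u \<in> B\<close> by auto
  have rv: "rw B v \<noteq> []" "hd (rw B v) = rt B" "last (rw B v) = v" "set (rw B v) \<subseteq> B"
    using root_walk B \<open>v \<in> B\<close> by auto
  define w where "w = rev (rw B u) @ tl (rw B v)"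
  have w_edges: "path_edges w \<subseteq> path_edges (rw B u) \<union> path_edges (rw B v)"
    using path_edges_join[of "rev (rw B u)" "rw B v"] ru rv by (simp add: w_def last_rev path_edges_rev)
  have "w \<noteq> []" "hd w = u" using ru by (simp_all add: w_def hd_rev)
  have "last w = v"
  proof (cases "tl (rw B v) = []")
    case True
    then have "rw B v = [rt B]" using rv(1,2) by (metis list.collapse)
    then show ?thesis using True ru rv(3) by (simp add: w_def last_rev)
  next
    case False
    then show ?thesis using rv(3) by (simp add: w_def last_tl)
  qed
  have "set w \<subseteq> B" using ru(4) rv(4) rv(1) list.set_sel(2)[of "rw B v"] by (auto simp: w_def)
  obtain Q where Q: "Q \<noteq> []" "distinct Q" "hd Q = hd w" "last Q = last w"
    "path_edges Q \<subseteq> path_edges w" "set Q \<subseteq> set w"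
    using walk_to_path[OF \<open>w \<noteq> []\<close>] by blast
  show ?thesis
  proof (rule that)
    show "path_edges Q \<subseteq> path_edges (rw B u) \<union> path_edges (rw B v)" using Q(5) w_edges by blast
  qed (use Q \<open>hd w = u\<close> \<open>last w = v\<close> \<open>set w \<subseteq> B\<close> in auto)
qed

lemma coloured_model_of_class:
  fixes c :: "'a set \<Rightarrow> 'c" and S :: "'c set" and L :: "'a set set \<Rightarrow> 'a set set"
  assumes lifts: "\<And>e. e \<in> F \<Longrightarrow> edge_lift e (L e)"
  shows "coloured_model E c S W {e\<in>F. c ` L e \<subseteq> S} (\<lambda>B. {u\<in>B. c ` path_edges (rw B u) \<subseteq> S})"
proof
  show "B1 \<inter> B2 = {}" if "B1 \<in> W" "B2 \<in> W" "B1 \<noteq> B2" for B1 B2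
    using disjoint that .
  show "\<exists>B1 B2. e = {B1, B2} \<and> B1 \<in> W \<and> B2 \<in> W \<and> B1 \<noteq> B2" if "e \<in> {e\<in>F. c ` L e \<subseteq> S}" for e
  proof -
    have "e \<in> F" using that by simp
    then show ?thesis using minor_edge[of e] by blast
  qed
next
  fix B u v
  assume B: "B \<in> W" and u: "u \<in> {u\<in>B. c ` path_edges (rw B u) \<subseteq> S}"
    and v: "v \<in> {u\<in>B. c ` path_edges (rw B u) \<subseteq> S}"
  then have "u \<in> B" "v \<in> B" and cu: "c ` path_edges (rw B u) \<subseteq> S"
    and cv: "c ` path_edges (rw B v) \<subseteq> S" by simp_all
  obtain Q where "Q \<noteq> []" "distinct Q" "hd Q = u" "last Q = v" "set Q \<subseteq> B"
    and Q: "path_edges Q \<subseteq> path_edges (rw B u) \<union> path_edges (rw B v)"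
    using root_walks_join[OF B \<open>u \<in> B\<close> \<open>v \<in> B\<close>] by blast
  moreover have "path_edges Q \<subseteq> E"
    using Q root_walk[OF B \<open>u \<in> B\<close>] root_walk[OF B \<open>v \<in> B\<close>] by blast
  moreover have "c ` path_edges Q \<subseteq> S" using Q cu cv by blast
  ultimately show "\<exists>Q. Q \<noteq> [] \<and> distinct Q \<and> hd Q = u \<and> last Q = v \<and> set Q \<subseteq> B
      \<and> path_edges Q \<subseteq> E \<and> c ` path_edges Q \<subseteq> S"
    by blast
next
  fix e B1 B2 assume e: "e \<in> {e\<in>F. c ` L e \<subseteq> S}" and "e = {B1, B2}"
  then have eF: "e \<in> F" and eS: "c ` L e \<subseteq> S" by auto
  note lift = lifts[OF eF, unfolded edge_lift_def]
  have "L e \<subseteq> E" using lift by (rule conjunct1)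
  obtain x y where xy: "x \<in> B1" "y \<in> B2" "{x, y} \<in> L e"
    and walks: "path_edges (rw B1 x) \<subseteq> L e" "path_edges (rw B2 y) \<subseteq> L e"
    using lift[THEN conjunct2, THEN conjunct2, rule_format, OF \<open>e = {B1, B2}\<close>] by blast
  have "c ` path_edges (rw B1 x) \<subseteq> S" "c ` path_edges (rw B2 y) \<subseteq> S"
    using walks eS by (meson image_mono order_trans)+
  moreover have "{x, y} \<in> E" "c {x, y} \<in> S" using xy(3) \<open>L e \<subseteq> E\<close> eS by auto
  ultimately show "\<exists>x\<in>{u\<in>B1. c ` path_edges (rw B1 u) \<subseteq> S}. \<exists>y\<in>{u\<in>B2. c ` path_edges (rw B2 u) \<subseteq> S}.
      {x, y} \<in> E \<and> c {x, y} \<in> S"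
    using xy(1,2) by blast
qed

text \<open>The minor edges of one colour class S (those whose lifts use only colours from S)
  span a graph whose cycles lift to cycles of G coloured from S; if such cycles of G are
  short, the class has at most d edges per branch set.\<close>
lemma card_colour_class:
  fixes c :: "'a set \<Rightarrow> 'c" and L :: "'a set set \<Rightarrow> 'a set set"
  assumes lifts: "\<And>e. e \<in> F \<Longrightarrow> edge_lift e (L e)"
    and d: "1 \<le> d"
    and short: "\<And>vs. is_cycle E vs \<Longrightarrow> card (c ` cycle_edges vs) \<le> 2 * r + 1 \<Longrightarrow> length vs \<le> d"
    and S: "finite S" "card S \<le> 2 * r + 1"
  shows "card {e\<in>F. c ` L e \<subseteq> S} \<le> d * card W"
proof -
  interpret model: coloured_model E c S W "{e\<in>F. c ` L e \<subseteq> S}" "\<lambda>B. {u\<in>B. c ` path_edges (rw B u) \<subseteq> S}"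
    by (rule coloured_model_of_class[of L, OF lifts])
  show ?thesis
  proof (rule card_edges_without_long_cycles[OF finite_branch_sets d])
    show "\<exists>a b. e = {a, b} \<and> a \<in> W \<and> b \<in> W \<and> a \<noteq> b" if "e \<in> {e\<in>F. c ` L e \<subseteq> S}" for e
      using model.minor_edge[OF that] by blast
  next
    fix qs assume "is_cycle {e\<in>F. c ` L e \<subseteq> S} qs"
    then obtain vs where vs: "is_cycle E vs" "length qs \<le> length vs" "c ` cycle_edges vs \<subseteq> S"
      using model.lift_cycle by blast
    have "card (c ` cycle_edges vs) \<le> 2 * r + 1" using card_mono[OF S(1) vs(3)] S(2) by simp
    then show "length qs \<le> d + 1" using short[OF vs(1)] vs(2) by simp
  qed
qed

lemma card_minor_edges:
  fixes c :: "'a set \<Rightarrow> 'c"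
  assumes d: "1 \<le> d"
    and short: "\<And>vs. is_cycle E vs \<Longrightarrow> card (c ` cycle_edges vs) \<le> 2 * r + 1 \<Longrightarrow> length vs \<le> d"
  shows "card F \<le> card (c ` E) ^ (2 * r + 1) * (d * card W)"
proof (cases "F = {}")
  case False
  define p where "p = 2 * r + 1"
  define C where "C = c ` E"
  define k where "k = min p (card C)"
  obtain L where lifts: "\<And>e. e \<in> F \<Longrightarrow> edge_lift e (L e)" using exists_edge_lifts by blast
  then have L_sub: "\<And>e. e \<in> F \<Longrightarrow> L e \<subseteq> E" and L_card: "\<And>e. e \<in> F \<Longrightarrow> card (L e) \<le> p"
    by (simp_all add: edge_lift_def p_def)
  have finC: "finite C" using finite_edges by (simp add: C_def)
  have "card F \<le> (card C choose k) * (d * card W)"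
  proof (rule card_le_by_colour_classes[OF finC])
    show "k \<le> card C" by (simp add: k_def)
  next
    fix e assume "e \<in> F"
    have "c ` L e \<subseteq> C" using L_sub[OF \<open>e \<in> F\<close>] by (auto simp: C_def)
    moreover have "card (c ` L e) \<le> p"
      using card_image_le[of "L e" c] L_card[OF \<open>e \<in> F\<close>] L_sub[OF \<open>e \<in> F\<close>] finite_edges
      by (meson finite_subset le_trans)
    ultimately show "c ` L e \<subseteq> C \<and> card (c ` L e) \<le> k"
      using card_mono[OF finC] by (simp add: k_def)
  next
    fix S assume "S \<subseteq> C" "card S = k"
    then show "card {e\<in>F. c ` L e \<subseteq> S} \<le> d * card W"
      using card_colour_class[where L = L and c = c and S = S, OF lifts d short]
        finite_subset[OF \<open>S \<subseteq> C\<close> finC] by (simp add: k_def p_def)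
  qed
  also have "\<dots> \<le> card C ^ p * (d * card W)"
  proof -
    obtain e where "e \<in> F" using False by blast
    then have "C \<noteq> {}" using minor_edge[of e] by (auto simp: C_def)
    then have "1 \<le> card C" using finC by (simp add: Suc_le_eq card_gt_0_iff)
    have "card C choose k \<le> card C ^ k" by (rule binomial_le_pow) (simp add: k_def)
    also have "\<dots> \<le> card C ^ p" using \<open>1 \<le> card C\<close> by (intro power_increasing) (simp_all add: k_def)
    finally show ?thesis by simp
  qed
  finally show ?thesis by (simp add: C_def p_def)
qed simp

end

text \<open>An injective colouring is good because f x \<le> x; hence N_f is well defined.\<close>
lemma good_colouring_exists:
  assumes graph: "simple_graph V E" and f_le: "\<forall>x. f x \<le> x"
  shows "\<exists>c :: 'a set \<Rightarrow> nat. good_colouring f E p c"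
proof -
  have "finite E"
    using graph finite_subset[of E "Pow V"] by (auto simp: simple_graph_def)
  then obtain c :: "'a set \<Rightarrow> nat" where c: "inj_on c E"
    using finite_imp_inj_to_nat_seg by blast
  have "min (f (length vs)) (p + 1) \<le> card (c ` cycle_edges vs)" if "is_cycle E vs" for vs
  proof -
    have "card (c ` cycle_edges vs) = length vs"
      using card_image[OF inj_on_subset[OF c]] card_cycle_edges[OF that] that
      by (simp add: is_cycle_iff)
    then show ?thesis using f_le by (simp add: min.coboundedI1)
  qed
  then show ?thesis unfolding good_colouring_def by blast
qed

lemma Nf_attained:
  assumes "simple_graph V E" and "\<forall>x. f x \<le> x"
  obtains c where "good_colouring f E p c" and "card (c ` E) = Nf f V E p"
proof -
  have "\<exists>k c. good_colouring f E p c \<and> card (c ` E) = k"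
    using good_colouring_exists[OF assms] by blast
  then have "\<exists>c. good_colouring f E p c \<and> card (c ` E) = Nf f V E p"
    unfolding Nf_def by (rule LeastI_ex)
  then show ?thesis using that by blast
qed

lemma finite_sublevel:
  fixes f :: "nat \<Rightarrow> nat"
  assumes "mono f" and "\<forall>m. \<exists>x. m \<le> f x"
  shows "finite {i. f i \<le> q}"
proof -
  obtain x where x: "Suc q \<le> f x" using assms(2) by blast
  have "i < x" if "f i \<le> q" for i
  proof (rule ccontr)
    assume "\<not> i < x"
    then have "f x \<le> f i" using monoD[OF assms(1)] by simp
    then show False using that x by simp
  qed
  then have "{i. f i \<le> q} \<subseteq> {..<x}" by blast
  then show ?thesis using finite_subset by blast
qed

lemma short_cycles_of_good_colouring:
  fixes f :: "nat \<Rightarrow> nat"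
  assumes "mono f" and "\<forall>m. \<exists>x. m \<le> f x"
    and "good_colouring f E p c" and "is_cycle E vs" and "card (c ` cycle_edges vs) \<le> p"
  shows "length vs \<le> Max {i. f i \<le> p}"
proof -
  have "min (f (length vs)) (p + 1) \<le> card (c ` cycle_edges vs)"
    using assms(3,4) by (simp add: good_colouring_def)
  then have "f (length vs) \<le> p" using assms(5) by simp
  then show ?thesis using finite_sublevel[OF assms(1,2)] by (simp add: Max_ge)
qed

text \<open>The maximum defining nabla exists: there are only finitely many shallow minors
  (in our representation by branch sets), and the empty one is among them.\<close>
lemma nabla_le:
  assumes graph: "simple_graph V E" and "0 \<le> b"
    and bound: "\<And>W F. shallow_minor V E r W F \<Longrightarrow> real (card F) \<le> b * real (card W)"
  shows "nabla V E r \<le> b"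
proof -
  define A where "A = {real (card F) / real (card W) | W F. shallow_minor V E r W F}"
  have "A \<subseteq> (\<lambda>(W, F). real (card F) / real (card W)) ` (Pow (Pow V) \<times> Pow (Pow (Pow V)))"
  proof
    fix a assume "a \<in> A"
    then obtain W F where a: "a = real (card F) / real (card W)" "shallow_minor V E r W F"
      by (auto simp: A_def)
    then have "(W, F) \<in> Pow (Pow V) \<times> Pow (Pow (Pow V))"
      using shallow_minor_carriers[OF a(2)] by blast
    then show "a \<in> (\<lambda>(W, F). real (card F) / real (card W)) ` (Pow (Pow V) \<times> Pow (Pow (Pow V)))"
      using a(1) by force
  qed
  moreover have "finite V" using graph by (simp add: simple_graph_def)
  ultimately have "finite A" by (meson finite_Pow_iff finite_SigmaI finite_imageI finite_subset)
  moreover have "shallow_minor V E r {} {}" by (simp add: shallow_minor_def)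
  then have "A \<noteq> {}" by (auto simp: A_def)
  moreover have "a \<le> b" if "a \<in> A" for a
  proof -
    obtain W F where a: "a = real (card F) / real (card W)" "shallow_minor V E r W F"
      using \<open>a \<in> A\<close> by (auto simp: A_def)
    show ?thesis
      using bound[OF a(2)] \<open>0 \<le> b\<close> by (cases "card W = 0") (simp_all add: a(1) divide_le_eq)
  qed
  ultimately show ?thesis by (simp add: nabla_def A_def[symmetric])
qed

lemma card_shallow_minor_edges:
  fixes c :: "'a set \<Rightarrow> 'c"
  assumes "simple_graph V E" and "shallow_minor V E r W F" and "1 \<le> d"
    and "\<And>vs. is_cycle E vs \<Longrightarrow> card (c ` cycle_edges vs) \<le> 2 * r + 1 \<Longrightarrow> length vs \<le> d"
  shows "card F \<le> card (c ` E) ^ (2 * r + 1) * (d * card W)"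
proof -
  obtain rt rw where "rooted_shallow_minor V E r W F rt rw"
    using exists_root_walks[OF assms(1,2)] by blast
  then show ?thesis using assms(3,4) by (rule rooted_shallow_minor.card_minor_edges)
qed

theorem mainTheorem3:
  fixes f :: "nat \<Rightarrow> nat" and g :: "nat \<Rightarrow> nat"
    and V :: "'a set" and E :: "'a set set" and r :: nat
  assumes f_mono: "mono f"
    and f_unbounded: "\<forall>m. \<exists>x. m \<le> f x"
    and f_le: "\<forall>x. f x \<le> x"
    and g_def: "\<forall>p. g p = Max {i. f i \<le> p}"
    and G: "simple_graph V E"
  shows "nabla V E r \<le> real (Nf f V E (2 * r + 1)) ^ (2 * r + 1) * real (g (2 * r + 1)) ^ 2"
proof -
  define N where "N = Nf f V E (2 * r + 1)"
  define d where "d = g (2 * r + 1)"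
  obtain c where good: "good_colouring f E (2 * r + 1) c" and N: "card (c ` E) = N"
    using Nf_attained[OF G f_le] unfolding N_def by blast
  have short: "length vs \<le> d" if "is_cycle E vs" "card (c ` cycle_edges vs) \<le> 2 * r + 1" for vs
    using short_cycles_of_good_colouring[OF f_mono f_unbounded good that] g_def by (simp add: d_def)
  have "2 * r + 1 \<le> d"
    using f_le g_def Max_ge[OF finite_sublevel[OF f_mono f_unbounded], of "2 * r + 1" "2 * r + 1"]
    by (simp add: d_def)
  then have "1 \<le> d" by simp
  have "nabla V E r \<le> real N ^ (2 * r + 1) * real d"
  proof (rule nabla_le[OF G])
    fix W F assume "shallow_minor V E r W F"
    from card_shallow_minor_edges[of V E r W F d c, OF G this \<open>1 \<le> d\<close> short]
    have "real (card F) \<le> real (N ^ (2 * r + 1) * (d * card W))" unfolding N of_nat_le_iff .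
    then show "real (card F) \<le> real N ^ (2 * r + 1) * real d * real (card W)"
      by (simp add: mult.assoc)
  qed simp
  also have "\<dots> \<le> real N ^ (2 * r + 1) * real d ^ 2"
    using \<open>1 \<le> d\<close> by (intro mult_left_mono) (simp_all add: power2_eq_square)
  finally show ?thesis by (simp add: N_def d_def)
qed

end
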